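(* Let $n\ge1$, $i,j\ge0$, and let $K$ be a finite ordered simplicial complex that is an $n$-pseudomanifold along $(\widehat{d_i},\widehat{d_j})$, with or without boundary. Let $\mathcal G$ be the subgraph of the $(n-1,\widehat{d_i},\widehat{d_j})$-graph of $K$ induced by the $n$-simplices. Then the directed flag complex of $\mathcal G$ has no simplices of dimension $\ge2$ (i.e. it has dimension at most $1$).
   Context: An ordered simplicial complex on a vertex set $V$ is a finite collection of non-empty finite tuples of pairwise distinct elements of $V$ closed under taking non-empty subsequences; $\dim(v_0,\dots,v_n)=n$. $\alpha\hookrightarrow\sigma$ means $\alpha$ is a non-empty subsequence of $\sigma$ (every simplex is a face of itself); a simplex is maximal if it is a face of no other simplex. For an $n$-simplex $\sigma=(v_0,\dots,v_n)$, $\widehat{d_i}(\sigma)$ is obtained by deleting $v_i$ if $i<n$ and deleting $v_n$ if $i\ge n$. For $\sigma,\tau$ of dimension $\ge q$, $(\sigma,\tau)$ is $q$-near along $(\widehat{d_i},\widehat{d_j})$ if $\sigma\hookrightarrow\tau$ or there is a $q$-simplex $\alpha\in K$ with $\alpha\hookrightarrow\widehat{d_i}(\sigma)$ and $\alpha\hookrightarrow\widehat{d_j}(\tau)$; $(\sigma,\tau)$ is $q$-connected along $(\widehat{d_i},\widehat{d_j})$ if there is a finite sequence from $\sigma$ to $\tau$ whose consecutive ordered pairs are $q$-near along $(\widehat{d_i},\widehat{d_j})$. The $(q,\widehat{d_i},\widehat{d_j})$-graph of $K$ is the directed graph with vertex set the simplices of dimension $\ge q$ and a directed edge $(\sigma,\tau)$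 for every ordered pair $\sigma\neq\tau$ that is $q$-near along $(\widehat{d_i},\widehat{d_j})$. $K$ is an $n$-pseudomanifold along $(\widehat{d_i},\widehat{d_j})$ if all maximal simplices are $n$-simplices, each $(n-1)$-simplex is a face of exactly two $n$-simplices, and any two $n$-simplices are $(n-1)$-connected along $(\widehat{d_i},\widehat{d_j})$; "with boundary" means the same with "exactly two" replaced by "at most two". The directed flag complex of a directed graph (without loops, reciprocal edges allowed) is the ordered simplicial complex whose $k$-simplices are the tuples $(x_0,\dots,x_k)$ of distinct vertices such that $(x_a,x_b)$ is an edge for all $a<b$. *)

theory Defs
  imports Main "HOL-Library.Sublist"
begin

text \<open>Ordered simplices are represented as lists of pairwise distinct vertices;
  a subsequence (face) relation is the library's subseq.\<close>

definition ordered_simplicial_complex :: "'v list set \<Rightarrow> bool" where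
  "ordered_simplicial_complex K \<longleftrightarrow>
     finite K \<and>
     (\<forall>\<sigma>\<in>K. \<sigma> \<noteq> [] \<and> distinct \<sigma>) \<and>
     (\<forall>\<sigma>\<in>K. \<forall>\<alpha>. \<alpha> \<noteq> [] \<and> subseq \<alpha> \<sigma> \<longrightarrow> \<alpha> \<in> K)"

definition sdim :: "'v list \<Rightarrow> nat" where
  "sdim \<sigma> = length \<sigma> - 1"

definition dhat :: "nat \<Rightarrow> 'v list \<Rightarrow> 'v list" where
  "dhat i \<sigma> = (if i < sdim \<sigma> then take i \<sigma> @ drop (Suc i) \<sigma> else butlast \<sigma>)"

definition maximal_simplex :: "'v list set \<Rightarrow> 'v list \<Rightarrow> bool" where
  "maximal_simplex K \<sigma> \<longleftrightarrow> \<sigma> \<in> K \<and> (\<forall>\<tau>\<in>K. subseq \<sigma> \<tau> \<longrightarrow> \<tau> = \<sigma>)"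

definition q_near :: "'v list set \<Rightarrow> nat \<Rightarrow> nat \<Rightarrow> nat \<Rightarrow> 'v list \<Rightarrow> 'v list \<Rightarrow> bool" where
  "q_near K q i j \<sigma> \<tau> \<longleftrightarrow>
     \<sigma> \<in> K \<and> \<tau> \<in> K \<and> sdim \<sigma> \<ge> q \<and> sdim \<tau> \<ge> q \<and>
     (subseq \<sigma> \<tau> \<or>
      (\<exists>\<alpha>\<in>K. sdim \<alpha> = q \<and> subseq \<alpha> (dhat i \<sigma>) \<and> subseq \<alpha> (dhat j \<tau>)))"

definition q_connected :: "'v list set \<Rightarrow> nat \<Rightarrow> nat \<Rightarrow> nat \<Rightarrow> 'v list \<Rightarrow> 'v list \<Rightarrow> bool" where
  "q_connected K q i j \<sigma> \<tau> \<longleftrightarrow>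
     (\<exists>s :: 'v list list. s \<noteq> [] \<and> hd s = \<sigma> \<and> last s = \<tau> \<and>
        (\<forall>k < length s - 1. q_near K q i j (s ! k) (s ! Suc k)))"

definition pseudomanifold_along :: "'v list set \<Rightarrow> nat \<Rightarrow> nat \<Rightarrow> nat \<Rightarrow> bool" where
  "pseudomanifold_along K n i j \<longleftrightarrow>
     (\<forall>\<sigma>. maximal_simplex K \<sigma> \<longrightarrow> sdim \<sigma> = n) \<and>
     (\<forall>\<alpha>\<in>K. sdim \<alpha> = n - 1 \<longrightarrow> card {\<tau>\<in>K. sdim \<tau> = n \<and> subseq \<alpha> \<tau>} = 2) \<and>
     (\<forall>\<sigma>\<in>K. \<forall>\<tau>\<in>K. sdim \<sigma> = n \<and> sdim \<tau> = n \<longrightarrow> q_connected K (n - 1) i j \<sigma> \<tau>)"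

definition pseudomanifold_with_boundary_along :: "'v list set \<Rightarrow> nat \<Rightarrow> nat \<Rightarrow> nat \<Rightarrow> bool" where
  "pseudomanifold_with_boundary_along K n i j \<longleftrightarrow>
     (\<forall>\<sigma>. maximal_simplex K \<sigma> \<longrightarrow> sdim \<sigma> = n) \<and>
     (\<forall>\<alpha>\<in>K. sdim \<alpha> = n - 1 \<longrightarrow> card {\<tau>\<in>K. sdim \<tau> = n \<and> subseq \<alpha> \<tau>} \<le> 2) \<and>
     (\<forall>\<sigma>\<in>K. \<forall>\<tau>\<in>K. sdim \<sigma> = n \<and> sdim \<tau> = n \<longrightarrow> q_connected K (n - 1) i j \<sigma> \<tau>)"

definition qgraph_vertices :: "'v list set \<Rightarrow> nat \<Rightarrow> 'v list set" where
  "qgraph_vertices K q = {\<sigma>\<in>K. sdim \<sigma> \<ge> q}"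

definition qgraph_edges :: "'v list set \<Rightarrow> nat \<Rightarrow> nat \<Rightarrow> nat \<Rightarrow> ('v list \<times> 'v list) set" where
  "qgraph_edges K q i j = {(\<sigma>, \<tau>). \<sigma> \<in> qgraph_vertices K q \<and> \<tau> \<in> qgraph_vertices K q \<and>
                                   \<sigma> \<noteq> \<tau> \<and> q_near K q i j \<sigma> \<tau>}"

definition induced_edges :: "('a \<times> 'a) set \<Rightarrow> 'a set \<Rightarrow> ('a \<times> 'a) set" where
  "induced_edges E W = {(x, y). (x, y) \<in> E \<and> x \<in> W \<and> y \<in> W}"

definition directed_flag_complex :: "'a set \<Rightarrow> ('a \<times> 'a) set \<Rightarrow> 'a list set" where
  "directed_flag_complex V E =
     {xs. xs \<noteq> [] \<and> distinct xs \<and> set xs \<subseteq> V \<and>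
          (\<forall>a b. a < b \<and> b < length xs \<longrightarrow> (xs ! a, xs ! b) \<in> E)}"

end

theory Submission
  imports Defs
begin

text \<open>Two distinct n-simplices \<open>\<sigma>, \<tau>\<close> are (n-1)-near only if \<open>dhat i \<sigma> = dhat j \<tau>\<close>: neither
  is a face of the other, and the witnessing (n-1)-simplex has full length in both faces, so it
  equals them. Hence the two edges leaving \<open>\<sigma>\<^sub>0\<close> in a 2-simplex \<open>(\<sigma>\<^sub>0, \<sigma>\<^sub>1, \<sigma>\<^sub>2)\<close> of the flag
  complex make \<open>dhat i \<sigma>\<^sub>0\<close> a common facet of three distinct n-simplices, which no pseudomanifold
  (with or without boundary) admits.\<close>

lemma length_dhat: "length (dhat i \<sigma>) = length \<sigma> - 1"
  unfolding dhat_def sdim_def by auto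

lemma sdim_dhat: "sdim (dhat i \<sigma>) = sdim \<sigma> - 1"
  by (simp add: sdim_def length_dhat)

lemma subseq_dhat: "subseq (dhat i \<sigma>) \<sigma>"
proof (cases "i < sdim \<sigma>")
  case True
  hence "i < length \<sigma>" by (simp add: sdim_def)
  moreover have "subseq (drop (Suc i) \<sigma>) (\<sigma> ! i # drop (Suc i) \<sigma>)"
    by (simp add: subseq_Cons')
  ultimately have "subseq (take i \<sigma> @ drop (Suc i) \<sigma>) (take i \<sigma> @ drop i \<sigma>)"
    unfolding subseq_append' by (simp add: Cons_nth_drop_Suc)
  then show ?thesis using True by (simp only: dhat_def if_True append_take_drop_id)
next
  case False
  then show ?thesis by (simp add: dhat_def prefixeq_butlast prefix_imp_subseq)
qed

lemma q_near_same_dim_imp_dhat_eq: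
  assumes "ordered_simplicial_complex K"
    and "q_near K q i j \<sigma> \<tau>" "sdim \<sigma> = Suc q" "sdim \<tau> = Suc q" "\<sigma> \<noteq> \<tau>"
  shows "dhat i \<sigma> \<in> K" "dhat i \<sigma> = dhat j \<tau>"
proof -
  have len: "length \<sigma> = q + 2" "length \<tau> = q + 2"
    using assms(3,4) by (auto simp: sdim_def)
  then have "\<not> subseq \<sigma> \<tau>"
    using assms(5) subseq_same_length by metis
  then obtain \<alpha> where \<alpha>: "\<alpha> \<in> K" "sdim \<alpha> = q" "subseq \<alpha> (dhat i \<sigma>)" "subseq \<alpha> (dhat j \<tau>)"
    using assms(2) by (auto simp: q_near_def)
  have "\<alpha> \<noteq> []"
    using \<alpha>(1) assms(1) by (simp add: ordered_simplicial_complex_def)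
  with \<alpha>(2) have "length \<alpha> = q + 1"
    by (cases \<alpha>) (simp_all add: sdim_def)
  then have "\<alpha> = dhat i \<sigma>" "\<alpha> = dhat j \<tau>"
    using \<alpha>(3,4) len by (simp_all add: length_dhat subseq_same_length)
  with \<alpha>(1) show "dhat i \<sigma> \<in> K" "dhat i \<sigma> = dhat j \<tau>" by simp_all
qed

lemma induced_qgraph_edge_common_facet:
  assumes "ordered_simplicial_complex K"
    and "(\<sigma>, \<tau>) \<in> induced_edges (qgraph_edges K q i j) {\<rho>\<in>K. sdim \<rho> = Suc q}"
  shows "dhat i \<sigma> \<in> K" "dhat i \<sigma> = dhat j \<tau>"
proof -
  from assms(2) have "q_near K q i j \<sigma> \<tau>" "sdim \<sigma> = Suc q" "sdim \<tau> = Suc q" "\<sigma> \<noteq> \<tau>"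
    by (auto simp: induced_edges_def qgraph_edges_def)
  from q_near_same_dim_imp_dhat_eq[OF assms(1) this]
  show "dhat i \<sigma> \<in> K" "dhat i \<sigma> = dhat j \<tau>" .
qed

lemma pseudomanifold_imp_with_boundary:
  "pseudomanifold_along K n i j \<Longrightarrow> pseudomanifold_with_boundary_along K n i j"
  unfolding pseudomanifold_along_def pseudomanifold_with_boundary_along_def by simp

lemma pseudomanifold_with_boundary_no_three_cofacets:
  assumes "pseudomanifold_with_boundary_along K n i j" "finite K"
    and "\<alpha> \<in> K" "sdim \<alpha> = n - 1"
    and "{\<sigma>\<^sub>0, \<sigma>\<^sub>1, \<sigma>\<^sub>2} \<subseteq> {\<tau>\<in>K. sdim \<tau> = n \<and> subseq \<alpha> \<tau>}"
  shows "\<sigma>\<^sub>0 = \<sigma>\<^sub>1 \<or> \<sigma>\<^sub>0 = \<sigma>\<^sub>2 \<or> \<sigma>\<^sub>1 = \<sigma>\<^sub>2"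
proof (rule ccontr)
  assume "\<not> ?thesis"
  then have "card {\<sigma>\<^sub>0, \<sigma>\<^sub>1, \<sigma>\<^sub>2} = 3" by simp
  moreover have "card {\<sigma>\<^sub>0, \<sigma>\<^sub>1, \<sigma>\<^sub>2} \<le> card {\<tau>\<in>K. sdim \<tau> = n \<and> subseq \<alpha> \<tau>}"
    using assms(2,5) by (simp add: card_mono)
  moreover have "card {\<tau>\<in>K. sdim \<tau> = n \<and> subseq \<alpha> \<tau>} \<le> 2"
    using assms(1,3,4) by (simp add: pseudomanifold_with_boundary_along_def)
  ultimately show False by simp
qed

theorem proposition4:
  fixes K :: "'v list set" and n i j :: nat
  assumes "n \<ge> 1"
    and "ordered_simplicial_complex K"
    and "pseudomanifold_along K n i j \<or> pseudomanifold_with_boundary_along K n i j"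
  shows "\<forall>s \<in> directed_flag_complex {\<sigma>\<in>K. sdim \<sigma> = n}
                 (induced_edges (qgraph_edges K (n - 1) i j) {\<sigma>\<in>K. sdim \<sigma> = n}).
           sdim s \<le> 1"
proof (intro ballI leI notI)
  obtain q where n: "n = Suc q" using assms(1) by (cases n) auto
  let ?V = "{\<sigma>\<in>K. sdim \<sigma> = n}"
  let ?E = "induced_edges (qgraph_edges K q i j) {\<sigma>\<in>K. sdim \<sigma> = Suc q}"
  fix s
  assume "s \<in> directed_flag_complex ?V (induced_edges (qgraph_edges K (n - 1) i j) ?V)"
    and "1 < sdim s"
  then have s: "distinct s" "2 < length s"
    and edges: "(s ! 0, s ! 1) \<in> ?E" "(s ! 0, s ! 2) \<in> ?E"
    by (auto simp: directed_flag_complex_def sdim_def n)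
  define F where "F = dhat i (s ! 0)"
  have F: "F \<in> K" "F = dhat j (s ! 1)" "F = dhat j (s ! 2)"
    using induced_qgraph_edge_common_facet[OF assms(2) edges(1)]
      induced_qgraph_edge_common_facet[OF assms(2) edges(2)] by (simp_all add: F_def)
  have V: "{s ! 0, s ! 1, s ! 2} \<subseteq> ?V"
    using edges by (simp add: induced_edges_def n)
  have "subseq F (s ! 0)" unfolding F_def by (rule subseq_dhat)
  moreover have "subseq F (s ! 1)" unfolding F(2) by (rule subseq_dhat)
  moreover have "subseq F (s ! 2)" unfolding F(3) by (rule subseq_dhat)
  ultimately have cofacets: "{s ! 0, s ! 1, s ! 2} \<subseteq> {\<tau>\<in>K. sdim \<tau> = n \<and> subseq F \<tau>}"
    using V by simp
  have "sdim F = n - 1"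
    using V by (simp add: F_def sdim_dhat)
  moreover have "finite K"
    using assms(2) by (simp add: ordered_simplicial_complex_def)
  moreover have "pseudomanifold_with_boundary_along K n i j"
    using assms(3) pseudomanifold_imp_with_boundary by blast
  ultimately have "s ! 0 = s ! 1 \<or> s ! 0 = s ! 2 \<or> s ! 1 = s ! 2"
    using pseudomanifold_with_boundary_no_three_cofacets F(1) cofacets by blast
  with s show False by (auto simp: nth_eq_iff_index_eq simp del: length_greater_0_conv)
qed

end
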